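(* Let $G=\langle a,b\mid a^n=1,\ b^t=a^k,\ b^{-1}ab=a^r\rangle$ with natural numbers $n,t,k,r$ satisfying $r^t\equiv1\pmod n$ and $k(r-1)\equiv0\pmod n$. Then the subgroups $H_{v,i,c}$, $(v,i,c)\in\mathfrak{N}$, are exactly all the normal subgroups of $G$, and they are pairwise distinct (distinct triples give distinct subgroups).
   Context: For a divisor $v$ of $n$, $o_v$ is the multiplicative order of $r$ modulo $v$. For integers $v,i,c$, $H_{v,i,c}=\langle a^v,a^ib^c\rangle$. $\mathfrak{N}=\{(v,i,c)\in\mathbb{Z}^3: v>0,\ v\mid n,\ c>0,\ c\mid t,\ 0\le i\le v-1,\ v\mid k+i\tfrac tc,\ o_v\mid c,\ v\mid i(r-1)\}$. *)

theory Defs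
  imports "HOL-Algebra.Algebra" "HOL-Number_Theory.Number_Theory"
begin

definition rels :: "('g, 'm) monoid_scheme \<Rightarrow> 'g \<Rightarrow> 'g \<Rightarrow> nat \<Rightarrow> nat \<Rightarrow> nat \<Rightarrow> nat \<Rightarrow> bool" where
  "rels H x y n t k r \<longleftrightarrow>
     x [^]\<^bsub>H\<^esub> n = \<one>\<^bsub>H\<^esub> \<and>
     y [^]\<^bsub>H\<^esub> t = x [^]\<^bsub>H\<^esub> k \<and>
     inv\<^bsub>H\<^esub> y \<otimes>\<^bsub>H\<^esub> x \<otimes>\<^bsub>H\<^esub> y = x [^]\<^bsub>H\<^esub> r"

text \<open>The test groups range over groups with carrier in nat; since finitely generated groups
  are countable, this is equivalent to the universal property over all groups.\<close>
definition presented_by :: "('g, 'm) monoid_scheme \<Rightarrow> 'g \<Rightarrow> 'g \<Rightarrow> nat \<Rightarrow> nat \<Rightarrow> nat \<Rightarrow> nat \<Rightarrow> bool" where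
  "presented_by G a b n t k r \<longleftrightarrow>
     group G \<and> a \<in> carrier G \<and> b \<in> carrier G \<and>
     generate G {a, b} = carrier G \<and> rels G a b n t k r \<and>
     (\<forall>(H :: nat monoid) x y. group H \<and> x \<in> carrier H \<and> y \<in> carrier H \<and> rels H x y n t k r
        \<longrightarrow> (\<exists>h \<in> hom G H. h a = x \<and> h b = y))"

definition Hsub :: "('g, 'm) monoid_scheme \<Rightarrow> 'g \<Rightarrow> 'g \<Rightarrow> int \<Rightarrow> int \<Rightarrow> int \<Rightarrow> 'g set" where
  "Hsub G a b v i c = generate G {a [^]\<^bsub>G\<^esub> v, a [^]\<^bsub>G\<^esub> i \<otimes>\<^bsub>G\<^esub> b [^]\<^bsub>G\<^esub> c}"

definition ov :: "nat \<Rightarrow> int \<Rightarrow> nat" where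
  "ov r v = ord (nat v) r"

definition Nset :: "nat \<Rightarrow> nat \<Rightarrow> nat \<Rightarrow> nat \<Rightarrow> (int \<times> int \<times> int) set" where
  "Nset n t k r = {(v, i, c). v > 0 \<and> v dvd int n \<and> c > 0 \<and> c dvd int t \<and> 0 \<le> i \<and> i \<le> v - 1 \<and>
      v dvd int k + i * (int t div c) \<and> int (ov r v) dvd c \<and> v dvd i * (int r - 1)}"

end

theory Submission
  imports Defs
begin

text \<open>
  Every element of \<open>G\<close> has a normal form \<open>a^x b^y\<close>, in which \<open>x\<close> is determined modulo \<open>n\<close> and
  \<open>y\<close> modulo \<open>t\<close>: the lower bounds on these orders come from an explicit group structure on
  \<open>{0..<t*n}\<close> satisfying the relations, into which \<open>G\<close> maps by the universal property.
  For a normal subgroup \<open>N\<close> let \<open>v > 0\<close> be least with \<open>a^v \<in> N\<close>, \<open>c > 0\<close> least with some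
  \<open>a^z b^c \<in> N\<close>, and \<open>i = z mod v\<close>. Conjugating \<open>a^i b^c\<close> by \<open>b\<close> and by \<open>a\<close> gives
  \<open>v | i(r-1)\<close> and \<open>o_v | c\<close>, and its \<open>t/c\<close>-th power \<open>a^(k + i t/c)\<close> lies in \<open>N\<close>; the normal
  form then shows \<open>N = H_{v,i,c}\<close>. Conversely these conditions make \<open>H_{v,i,c}\<close> normal, and
  \<open>v\<close>, \<open>c\<close>, \<open>i\<close> are recovered from \<open>H_{v,i,c}\<close> as the invariants just described.
\<close>

lemma (in group) conj_eq_iff_mult_eq:
  assumes "x \<in> carrier G" "y \<in> carrier G" "z \<in> carrier G"
  shows "inv y \<otimes> x \<otimes> y = z \<longleftrightarrow> x \<otimes> y = y \<otimes> z"
  using assms by (metis inv_solve_left m_assoc m_closed inv_closed)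

lemma (in group) subgroup_nat_pow_closed:
  "subgroup K G \<Longrightarrow> x \<in> K \<Longrightarrow> x [^] (m::nat) \<in> K"
  by (induction m) (auto simp: subgroup.one_closed subgroup.m_closed)

lemma (in group) finite_inv_eq_nat_pow:
  assumes "finite (carrier G)" "x \<in> carrier G"
  shows "inv x = x [^] (order G - 1)"
proof (rule inv_equality)
  have "order G \<noteq> 0"
    using assms(1) by (auto simp: order_def)
  then have "x [^] (order G - 1) \<otimes> x = x [^] order G"
    using assms(2) by (simp flip: nat_pow_Suc)
  then show "x [^] (order G - 1) \<otimes> x = \<one>"
    using pow_order_eq_1[OF assms(2)] by simp
qed (use assms(2) in simp_all)

lemma (in group) finite_subgroupI:
  assumes "finite (carrier G)" "S \<subseteq> carrier G" "\<one> \<in> S"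
    and "\<And>x y. x \<in> S \<Longrightarrow> y \<in> S \<Longrightarrow> x \<otimes> y \<in> S"
  shows "subgroup S G"
proof (rule subgroupI)
  fix x assume x: "x \<in> S"
  have "x [^] (m::nat) \<in> S" for m
    by (induction m) (use assms x in auto)
  then show "inv x \<in> S"
    using finite_inv_eq_nat_pow[OF assms(1)] x assms(2) by auto
qed (use assms in auto)

lemma (in group) generate_conj_closed:
  assumes S: "S \<subseteq> carrier G" and g: "g \<in> carrier G"
    and gens: "\<And>s. s \<in> S \<Longrightarrow> inv g \<otimes> s \<otimes> g \<in> generate G S"
  shows "h \<in> generate G S \<Longrightarrow> inv g \<otimes> h \<otimes> g \<in> generate G S"
proof (induction h rule: generate.induct)
  case one
  then show ?case using g generate.one by simp
next
  case (incl h)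
  then show ?case by (rule gens)
next
  case (inv h)
  then have "inv g \<otimes> inv h \<otimes> g = inv (inv g \<otimes> h \<otimes> g)"
    using S g by (auto simp: inv_mult_group m_assoc)
  then show ?case
    using generate_m_inv_closed[OF S gens[OF inv]] by simp
next
  case (eng h1 h2)
  have "h1 \<in> carrier G" "h2 \<in> carrier G"
    using eng.hyps generate_in_carrier[OF S] by auto
  then have "inv g \<otimes> (h1 \<otimes> h2) \<otimes> g = (inv g \<otimes> h1 \<otimes> g) \<otimes> (inv g \<otimes> h2 \<otimes> g)"
    using g by (metis m_assoc m_closed inv_closed r_inv r_one)
  then show ?case
    using generate.eng[OF eng.IH] by simp
qed

lemma (in group) finite_generate_normalI:
  assumes fin: "finite (carrier G)" and T: "generate G T = carrier G" "T \<subseteq> carrier G"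
    and S: "S \<subseteq> carrier G"
    and conj: "\<And>g s. g \<in> T \<Longrightarrow> s \<in> S \<Longrightarrow> inv g \<otimes> s \<otimes> g \<in> generate G S"
  shows "generate G S \<lhd> G"
proof -
  define Q where "Q = {g \<in> carrier G. \<forall>h \<in> generate G S. inv g \<otimes> h \<otimes> g \<in> generate G S}"
  have mult: "g1 \<otimes> g2 \<in> Q" if "g1 \<in> Q" "g2 \<in> Q" for g1 g2
  proof -
    have c: "g1 \<in> carrier G" "g2 \<in> carrier G"
      using that by (auto simp: Q_def)
    have "inv (g1 \<otimes> g2) \<otimes> h \<otimes> (g1 \<otimes> g2) = inv g2 \<otimes> (inv g1 \<otimes> h \<otimes> g1) \<otimes> g2"
      if "h \<in> generate G S" for h
      using c generate_in_carrier[OF S that] by (simp add: inv_mult_group m_assoc)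
    then show ?thesis
      using that c by (auto simp: Q_def)
  qed
  have "subgroup Q G"
    using generate_in_carrier[OF S] by (intro finite_subgroupI fin mult) (auto simp: Q_def)
  moreover have "T \<subseteq> Q"
    using T(2) generate_conj_closed[OF S _ conj] by (auto simp: Q_def)
  ultimately have Q: "carrier G \<subseteq> Q"
    using generate_subgroup_incl T(1) by metis
  show ?thesis
  proof (rule normal_invI[OF generate_is_subgroup[OF S]])
    fix x h assume x: "x \<in> carrier G" and h: "h \<in> generate G S"
    then have "inv (inv x) \<otimes> h \<otimes> inv x \<in> generate G S"
      using Q inv_closed[OF x] by (auto simp: Q_def)
    then show "x \<otimes> h \<otimes> inv x \<in> generate G S"
      using x by simp
  qed
qed

lemma (in group) subgroup_nat_pow_mem_iff_dvd:
  assumes K: "subgroup K G" and x: "x \<in> carrier G" and e: "x [^] (e::nat) \<in> K" "e > 0"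
  obtains v :: nat where "v > 0" "\<And>m::nat. x [^] m \<in> K \<longleftrightarrow> v dvd m"
proof -
  define v where "v = (LEAST v::nat. 0 < v \<and> x [^] v \<in> K)"
  have v: "0 < v" "x [^] v \<in> K"
    using LeastI[of "\<lambda>v. 0 < v \<and> x [^] v \<in> K", OF conjI[OF e(2,1)]] by (simp_all add: v_def)
  have "x [^] m \<in> K \<longleftrightarrow> v dvd m" for m :: nat
  proof
    assume "v dvd m"
    then show "x [^] m \<in> K"
      using subgroup_nat_pow_closed[OF K v(2)] x by (auto simp: nat_pow_pow)
  next
    assume m: "x [^] m \<in> K"
    have "x [^] m = x [^] (v * (m div v) + m mod v)"
      by simp
    also have "\<dots> = (x [^] v) [^] (m div v) \<otimes> x [^] (m mod v)"
      using x by (simp only: nat_pow_mult[symmetric] nat_pow_pow)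
    finally have "x [^] (m mod v) = inv ((x [^] v) [^] (m div v)) \<otimes> x [^] m"
      using x by (simp add: inv_solve_left)
    then have "x [^] (m mod v) \<in> K"
      using K m subgroup_nat_pow_closed[OF K v(2)] by (simp add: subgroup.m_closed subgroup.m_inv_closed)
    then have "m mod v = 0"
      using not_less_Least[of "m mod v" "\<lambda>v. 0 < v \<and> x [^] v \<in> K"] v(1) by (auto simp: v_def)
    then show "v dvd m" by auto
  qed
  then show ?thesis using that v(1) by blast
qed

lemma cong_add_pred_mult_iff:
  fixes n v x x' :: nat
  assumes "n > 0" "v dvd n"
  shows "v dvd x + (n - 1) * x' \<longleftrightarrow> [x = x'] (mod v)"
proof -
  have "int (x + (n - 1) * x') = int n * int x' + (int x - int x')"
    using assms(1) by (cases n) (simp_all add: algebra_simps)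
  moreover have "int v dvd int n * int x'"
    using assms(2) by simp
  ultimately have "v dvd x + (n - 1) * x' \<longleftrightarrow> int v dvd int x - int x'"
    by (metis int_dvd_int_iff dvd_add_right_iff)
  then show ?thesis
    by (simp add: cong_iff_dvd_diff cong_int_iff[symmetric])
qed

lemma cong_add_pred_add_iff:
  fixes n v x y :: nat
  assumes "n > 0" "v dvd n"
  shows "[n - 1 + x + y = x] (mod v) \<longleftrightarrow> [y = 1] (mod v)"
proof -
  have "int (n - 1 + x + y) - int x = int n + (int y - 1)"
    using assms(1) by (cases n) simp_all
  moreover have "int v dvd int n"
    using assms(2) by simp
  ultimately show ?thesis
    by (simp add: cong_iff_dvd_diff cong_int_iff[symmetric] dvd_add_right_iff)
qed

section \<open>A concrete group satisfying the relations\<close>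

text \<open>
  A number below \<open>t * n\<close> written as \<open>j * n + i\<close> with \<open>i < n\<close> encodes \<open>a^i b^j\<close>;
  \<open>meta_enc n t k x y\<close> is the code of \<open>a^x b^y\<close>, reduced using \<open>b^t = a^k\<close>.
\<close>
definition meta_enc :: "nat \<Rightarrow> nat \<Rightarrow> nat \<Rightarrow> nat \<Rightarrow> nat \<Rightarrow> nat" where
  "meta_enc n t k x y = (y mod t) * n + (x + k * (y div t)) mod n"

definition meta_mult :: "nat \<Rightarrow> nat \<Rightarrow> nat \<Rightarrow> nat \<Rightarrow> nat \<Rightarrow> nat \<Rightarrow> nat" where
  "meta_mult n t k r p q = meta_enc n t k (p mod n * r ^ (q div n) + q mod n) (p div n + q div n)"

definition metacyclic_model :: "nat \<Rightarrow> nat \<Rightarrow> nat \<Rightarrow> nat \<Rightarrow> nat monoid" where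
  "metacyclic_model n t k r = \<lparr>carrier = {..< t * n}, monoid.mult = meta_mult n t k r, one = 0\<rparr>"

locale metacyclic_params =
  fixes n t k r :: nat
  assumes n_pos: "n > 0" and t_pos: "t > 0"
    and r_pow_t: "[r ^ t = 1] (mod n)" and k_mult_r: "[k * r = k] (mod n)"
begin

abbreviation "enc \<equiv> meta_enc n t k"
abbreviation "M \<equiv> metacyclic_model n t k r"

lemma r_pow_mod_t: "[r ^ (x mod t) = r ^ x] (mod n)"
proof -
  have "[r ^ x = (r ^ t) ^ (x div t) * r ^ (x mod t)] (mod n)"
    by (simp flip: power_mult power_add)
  also have "[(r ^ t) ^ (x div t) * r ^ (x mod t) = 1 ^ (x div t) * r ^ (x mod t)] (mod n)"
    by (intro cong_mult cong_pow r_pow_t cong_refl)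
  finally show ?thesis by (simp add: cong_sym)
qed

lemma k_mult_r_pow: "[k * r ^ x = k] (mod n)"
proof (induction x)
  case (Suc x)
  have "[k * r ^ Suc x = (k * r ^ x) * r] (mod n)" by (simp add: ac_simps)
  also have "[(k * r ^ x) * r = k * r] (mod n)" by (intro cong_mult Suc cong_refl)
  finally show ?case using k_mult_r by (rule cong_trans)
qed simp

lemma enc_div: "enc x y div n = y mod t"
  and enc_mod: "enc x y mod n = (x + k * (y div t)) mod n"
  and enc_less: "enc x y < t * n"
proof -
  have "(y mod t) * n + (x + k * (y div t)) mod n < (y mod t) * n + n"
    using n_pos by simp
  also have "\<dots> \<le> t * n"
    using t_pos by (metis Suc_leI mod_less_divisor mult_Suc mult_le_mono1 add.commute)
  finally show "enc x y < t * n" unfolding meta_enc_def .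
qed (simp_all add: meta_enc_def n_pos)

lemma enc_cong: "[x = x'] (mod n) \<Longrightarrow> enc x y = enc x' y"
  unfolding meta_enc_def cong_def by (metis mod_add_left_eq)

lemma enc_decode: "p < t * n \<Longrightarrow> enc (p mod n) (p div n) = p"
  unfolding meta_enc_def by (simp add: less_mult_imp_div_less)

lemma mult_enc: "meta_mult n t k r (enc x y) (enc x' y') = enc (x * r ^ y' + x') (y + y')"
proof -
  define w where "w = y mod t + y' mod t"
  define u where "u = (x + k * (y div t)) mod n * r ^ (y' mod t) + (x' + k * (y' div t)) mod n"
  have lhs: "meta_mult n t k r (enc x y) (enc x' y') = enc u w"
    unfolding meta_mult_def u_def w_def enc_div enc_mod ..
  have "[u + k * (w div t) = (x + k * (y div t)) * r ^ (y' mod t) + (x' + k * (y' div t)) + k * (w div t)] (mod n)"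
    unfolding u_def by (intro cong_add cong_mult cong_refl) (simp_all add: cong_def)
  also have "[(x + k * (y div t)) * r ^ (y' mod t) + (x' + k * (y' div t)) + k * (w div t)
      = (x + k * (y div t)) * r ^ y' + (x' + k * (y' div t)) + k * (w div t)] (mod n)"
    by (intro cong_add cong_mult cong_refl r_pow_mod_t)
  also have "[(x + k * (y div t)) * r ^ y' + (x' + k * (y' div t)) + k * (w div t)
      = x * r ^ y' + (k * r ^ y') * (y div t) + (x' + k * (y' div t)) + k * (w div t)] (mod n)"
    by (simp add: algebra_simps)
  also have "[x * r ^ y' + (k * r ^ y') * (y div t) + (x' + k * (y' div t)) + k * (w div t)
      = x * r ^ y' + k * (y div t) + (x' + k * (y' div t)) + k * (w div t)] (mod n)"
    by (intro cong_add cong_mult cong_refl k_mult_r_pow)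
  also have "x * r ^ y' + k * (y div t) + (x' + k * (y' div t)) + k * (w div t)
      = x * r ^ y' + x' + k * ((y + y') div t)"
    using div_add1_eq[of y y' t] unfolding w_def by (simp add: algebra_simps)
  finally have "(u + k * (w div t)) mod n = (x * r ^ y' + x' + k * ((y + y') div t)) mod n"
    unfolding cong_def .
  moreover have "w mod t = (y + y') mod t"
    unfolding w_def by (simp add: mod_add_eq)
  ultimately show ?thesis
    unfolding lhs unfolding meta_enc_def by simp
qed

lemma model_mult: "enc x y \<otimes>\<^bsub>M\<^esub> enc x' y' = enc (x * r ^ y' + x') (y + y')"
  by (simp add: metacyclic_model_def mult_enc)

lemma model_one: "\<one>\<^bsub>M\<^esub> = enc 0 0"
  by (simp add: metacyclic_model_def meta_enc_def)

lemma enc_in_model: "enc x y \<in> carrier M"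
  by (simp add: metacyclic_model_def enc_less)

lemma model_elem_enc: "p \<in> carrier M \<Longrightarrow> \<exists>x y. p = enc x y"
  by (metis enc_decode metacyclic_model_def lessThan_iff partial_object.select_convs(1))

lemma enc_mult_t_eq_one:
  assumes "[x + k * y = 0] (mod n)" shows "enc x (t * y) = enc 0 0"
  using assms t_pos by (simp add: meta_enc_def cong_0_iff)

lemma model_inverse_exists: "\<exists>q \<in> carrier M. q \<otimes>\<^bsub>M\<^esub> enc x y = \<one>\<^bsub>M\<^esub>"
proof -
  define m where "m = (x + k * y) mod n"
  define x' where "x' = (n - m) * r ^ ((t - 1) * y)"
  have ty: "(t - 1) * y + y = t * y"
    using t_pos by (cases t) simp_all
  then have "x' * r ^ y = (n - m) * (r ^ t) ^ y"
    unfolding x'_def by (simp add: mult.assoc flip: power_add power_mult)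
  then have "[x' * r ^ y + x + k * y = (n - m) * (r ^ t) ^ y + (x + k * y)] (mod n)"
    by (simp add: add.assoc)
  also have "[(n - m) * (r ^ t) ^ y + (x + k * y) = (n - m) * 1 ^ y + m] (mod n)"
    using cong_pow[OF r_pow_t, of y] unfolding m_def
    by (intro cong_add cong_scalar_left) (simp_all add: cong_def)
  finally have "(x' * r ^ y + x + k * y) mod n = ((n - m) + m) mod n"
    unfolding cong_def by simp
  then have "[x' * r ^ y + x + k * y = 0] (mod n)"
    using n_pos by (simp add: m_def cong_def)
  then have "enc x' ((t - 1) * y) \<otimes>\<^bsub>M\<^esub> enc x y = \<one>\<^bsub>M\<^esub>"
    unfolding model_one model_mult ty by (rule enc_mult_t_eq_one)
  then show ?thesis using enc_in_model by blast
qed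

lemma model_group: "group M"
proof (rule groupI)
  show "p \<otimes>\<^bsub>M\<^esub> q \<in> carrier M" for p q
    by (simp add: metacyclic_model_def meta_mult_def enc_less)
  show "\<one>\<^bsub>M\<^esub> \<in> carrier M"
    by (simp add: model_one enc_in_model)
  show "p \<otimes>\<^bsub>M\<^esub> q \<otimes>\<^bsub>M\<^esub> z = p \<otimes>\<^bsub>M\<^esub> (q \<otimes>\<^bsub>M\<^esub> z)"
    if pqz: "p \<in> carrier M" "q \<in> carrier M" "z \<in> carrier M" for p q z
  proof -
    obtain x y x' y' x'' y'' where "p = enc x y" "q = enc x' y'" "z = enc x'' y''"
      using pqz model_elem_enc by meson
    then show ?thesis by (simp add: model_mult algebra_simps power_add)
  qed
  show "\<one>\<^bsub>M\<^esub> \<otimes>\<^bsub>M\<^esub> p = p" if "p \<in> carrier M" for p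
    using model_elem_enc[OF that] by (auto simp: model_one model_mult)
  show "\<exists>q \<in> carrier M. q \<otimes>\<^bsub>M\<^esub> p = \<one>\<^bsub>M\<^esub>" if "p \<in> carrier M" for p
    using model_inverse_exists model_elem_enc[OF that] by blast
qed

lemma model_gen_a_pow: "enc 1 0 [^]\<^bsub>M\<^esub> (m::nat) = enc m 0"
  by (induction m) (simp_all add: model_one model_mult)

lemma model_gen_b_pow: "enc 0 1 [^]\<^bsub>M\<^esub> (m::nat) = enc 0 m"
  by (induction m) (simp_all add: model_one model_mult)

lemma model_rels: "rels M (enc 1 0) (enc 0 1) n t k r"
proof -
  interpret M: group M by (rule model_group)
  have a: "enc 1 0 \<in> carrier M" and b: "enc 0 1 \<in> carrier M" by (simp_all add: enc_in_model)
  have "enc 1 0 \<otimes>\<^bsub>M\<^esub> enc 0 1 = enc 0 1 \<otimes>\<^bsub>M\<^esub> enc 1 0 [^]\<^bsub>M\<^esub> r"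
    unfolding model_gen_a_pow by (simp add: model_mult)
  then have "inv\<^bsub>M\<^esub> enc 0 1 \<otimes>\<^bsub>M\<^esub> enc 1 0 \<otimes>\<^bsub>M\<^esub> enc 0 1 = enc 1 0 [^]\<^bsub>M\<^esub> r"
    using a b by (subst M.conj_eq_iff_mult_eq) auto
  moreover have "enc 1 0 [^]\<^bsub>M\<^esub> n = \<one>\<^bsub>M\<^esub>"
    unfolding model_gen_a_pow model_one by (simp add: enc_cong cong_0_iff)
  moreover have "enc 0 1 [^]\<^bsub>M\<^esub> t = enc 1 0 [^]\<^bsub>M\<^esub> k"
    unfolding model_gen_a_pow model_gen_b_pow using t_pos by (simp add: meta_enc_def)
  ultimately show ?thesis unfolding rels_def by blast
qed

lemma presented_by_hom_model:
  assumes "presented_by G a b n t k r"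
  obtains h where "h \<in> hom G M"
    "\<And>z y. h (a [^]\<^bsub>G\<^esub> (z::nat) \<otimes>\<^bsub>G\<^esub> b [^]\<^bsub>G\<^esub> (y::nat)) = enc (z * r ^ y) y"
proof -
  have G: "group G" "a \<in> carrier G" "b \<in> carrier G"
    using assms by (auto simp: presented_by_def)
  obtain h where h: "h \<in> hom G M" "h a = enc 1 0" "h b = enc 0 1"
    using assms model_group model_rels enc_in_model unfolding presented_by_def by blast
  have "h (a [^]\<^bsub>G\<^esub> z \<otimes>\<^bsub>G\<^esub> b [^]\<^bsub>G\<^esub> y) = enc (z * r ^ y) y" for z y :: nat
  proof -
    have "h (a [^]\<^bsub>G\<^esub> z \<otimes>\<^bsub>G\<^esub> b [^]\<^bsub>G\<^esub> y) = h a [^]\<^bsub>M\<^esub> z \<otimes>\<^bsub>M\<^esub> h b [^]\<^bsub>M\<^esub> y"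
      using G h(1) model_group by (simp add: hom_mult hom_nat_pow group.is_monoid monoid.nat_pow_closed)
    then show ?thesis
      unfolding h(2,3) model_gen_a_pow model_gen_b_pow by (simp add: model_mult)
  qed
  then show ?thesis using that h(1) by blast
qed

lemma presented_by_a_pow_eq_one_imp_dvd:
  assumes "presented_by G a b n t k r" "a [^]\<^bsub>G\<^esub> (z::nat) = \<one>\<^bsub>G\<^esub>"
  shows "n dvd z"
proof -
  obtain h where h: "h \<in> hom G M"
    "\<And>z y. h (a [^]\<^bsub>G\<^esub> (z::nat) \<otimes>\<^bsub>G\<^esub> b [^]\<^bsub>G\<^esub> (y::nat)) = enc (z * r ^ y) y"
    using presented_by_hom_model[OF assms(1)] by blast
  have G: "group G" using assms(1) by (simp add: presented_by_def)
  have "enc z 0 = h (\<one>\<^bsub>G\<^esub> \<otimes>\<^bsub>G\<^esub> \<one>\<^bsub>G\<^esub>)"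
    using h(2)[of z 0] assms(2) by simp
  also have "\<dots> = enc 0 0"
    using hom_one[OF h(1) G model_group] G by (simp add: group.is_monoid model_one)
  finally have "enc z 0 mod n = enc 0 0 mod n"
    by simp
  then show ?thesis
    by (simp add: enc_mod mod_eq_0_iff_dvd)
qed

lemma presented_by_nf_b_exponent_unique:
  assumes "presented_by G a b n t k r"
    and "a [^]\<^bsub>G\<^esub> (z::nat) \<otimes>\<^bsub>G\<^esub> b [^]\<^bsub>G\<^esub> (y::nat) = a [^]\<^bsub>G\<^esub> (z'::nat) \<otimes>\<^bsub>G\<^esub> b [^]\<^bsub>G\<^esub> (y'::nat)"
  shows "y mod t = y' mod t"
proof -
  obtain h where "\<And>z y. h (a [^]\<^bsub>G\<^esub> (z::nat) \<otimes>\<^bsub>G\<^esub> b [^]\<^bsub>G\<^esub> (y::nat)) = enc (z * r ^ y) y"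
    using presented_by_hom_model[OF assms(1)] by blast
  then have "enc (z * r ^ y) y div n = enc (z' * r ^ y') y' div n"
    using assms(2) by metis
  then show ?thesis by (simp add: enc_div)
qed

end

section \<open>Normal forms in the presented group\<close>

locale metacyclic = metacyclic_params n t k r for n t k r +
  fixes G (structure) and a b
  assumes presented: "presented_by G a b n t k r"
begin

sublocale group G
  using presented by (simp add: presented_by_def)

lemma a_closed [simp]: "a \<in> carrier G"
  and b_closed [simp]: "b \<in> carrier G"
  and generate_a_b: "generate G {a, b} = carrier G"
  and a_pow_n: "a [^] n = \<one>"
  and b_pow_t: "b [^] t = a [^] k"
  and conj_b_a: "inv b \<otimes> a \<otimes> b = a [^] r"
  using presented by (simp_all add: presented_by_def rels_def)

definition rinv :: nat where
  "rinv = r ^ (t - 1)"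

lemma rinv_mult_r: "[rinv * r = 1] (mod n)"
  using r_pow_t t_pos by (simp add: rinv_def flip: power_Suc2)

lemma r_pow_cong_one_iff:
  assumes "v dvd n" shows "[r ^ c = 1] (mod v) \<longleftrightarrow> [rinv ^ c = 1] (mod v)"
proof -
  have "[rinv ^ c * r ^ c = 1] (mod v)"
    using cong_pow[OF cong_dvd_modulus_nat[OF rinv_mult_r assms], of c] by (simp add: power_mult_distrib)
  then show ?thesis
    by (metis cong_scalar_left cong_scalar_right cong_sym cong_trans mult_1_right mult_1_left)
qed

lemma a_pow_mod: "a [^] (p::nat) = a [^] (p mod n)"
proof -
  have "a [^] p = a [^] (n * (p div n) + p mod n)"
    by simp
  also have "\<dots> = (a [^] n) [^] (p div n) \<otimes> a [^] (p mod n)"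
    by (simp only: nat_pow_mult[symmetric] nat_pow_pow a_closed)
  finally show ?thesis by (simp add: a_pow_n)
qed

lemma a_pow_eq_iff: "a [^] (p::nat) = a [^] (q::nat) \<longleftrightarrow> [p = q] (mod n)"
proof
  show "[p = q] (mod n) \<Longrightarrow> a [^] p = a [^] q"
    unfolding cong_def by (metis a_pow_mod)
  have "[p = q] (mod n)" if "a [^] p = a [^] q" "p \<le> q" for p q :: nat
  proof -
    have "a [^] p \<otimes> a [^] (q - p) = a [^] q"
      using that(2) by (simp add: nat_pow_mult)
    then have "a [^] p \<otimes> a [^] (q - p) = a [^] p \<otimes> \<one>"
      using that(1) by simp
    then have "n dvd q - p"
      by (intro presented_by_a_pow_eq_one_imp_dvd[OF presented]) (simp del: r_one)
    then show ?thesis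
      using that(2) by (metis cong_altdef_nat cong_sym)
  qed
  then show "a [^] p = a [^] q \<Longrightarrow> [p = q] (mod n)"
    by (metis cong_sym nat_le_linear)
qed

lemma nf_b_exponent_unique:
  "a [^] (z::nat) \<otimes> b [^] (y::nat) = a [^] (z'::nat) \<otimes> b [^] (y'::nat) \<Longrightarrow> y mod t = y' mod t"
  using presented_by_nf_b_exponent_unique[OF presented] .

lemma inv_a_pow: "inv (a [^] (x::nat)) = a [^] ((n - 1) * x)"
proof (rule inv_equality)
  have "a [^] ((n - 1) * x) \<otimes> a [^] x = (a [^] n) [^] x"
    using n_pos by (simp add: nat_pow_mult nat_pow_pow algebra_simps)
  then show "a [^] ((n - 1) * x) \<otimes> a [^] x = \<one>"
    by (simp add: a_pow_n)
qed simp_all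

lemma a_pow_mult_b: "a [^] (x::nat) \<otimes> b = b \<otimes> a [^] (x * r)"
proof (induction x)
  case (Suc x)
  have "a \<otimes> b = b \<otimes> a [^] r"
    using conj_b_a conj_eq_iff_mult_eq by simp
  then have "a [^] Suc x \<otimes> b = (a [^] x \<otimes> b) \<otimes> a [^] r"
    by (simp add: m_assoc)
  then show ?case
    by (simp add: Suc m_assoc nat_pow_mult add.commute)
qed simp

lemma a_pow_mult_b_pow: "a [^] (x::nat) \<otimes> b [^] (y::nat) = b [^] y \<otimes> a [^] (x * r ^ y)"
proof (induction y arbitrary: x)
  case (Suc y)
  have "a [^] x \<otimes> b [^] Suc y = b [^] y \<otimes> (a [^] (x * r ^ y) \<otimes> b)"
    by (simp add: Suc m_assoc flip: m_assoc[of "a [^] x"])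
  then show ?case
    by (simp add: a_pow_mult_b m_assoc ac_simps)
qed simp

lemma b_pow_mult_a_pow: "b [^] (y::nat) \<otimes> a [^] (x::nat) = a [^] (x * rinv ^ y) \<otimes> b [^] y"
proof -
  have "[x * rinv ^ y * r ^ y = x * 1 ^ y] (mod n)"
    using cong_scalar_left[OF cong_pow[OF rinv_mult_r, of y], of x]
    by (simp add: mult.assoc power_mult_distrib)
  then show ?thesis
    by (simp add: a_pow_mult_b_pow a_pow_eq_iff cong_sym)
qed

lemma nf_mult:
  "(a [^] (x::nat) \<otimes> b [^] (y::nat)) \<otimes> (a [^] (x'::nat) \<otimes> b [^] (y'::nat))
     = a [^] (x + x' * rinv ^ y) \<otimes> b [^] (y + y')"
proof -
  have "(a [^] x \<otimes> b [^] y) \<otimes> (a [^] x' \<otimes> b [^] y') = a [^] x \<otimes> (b [^] y \<otimes> a [^] x') \<otimes> b [^] y'"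
    by (simp add: m_assoc)
  then show ?thesis
    by (simp add: b_pow_mult_a_pow m_assoc nat_pow_mult[symmetric])
qed

lemma b_pow_nt: "b [^] (n * t) = \<one>"
proof -
  have "b [^] (n * t) = (b [^] t) [^] n"
    by (simp add: nat_pow_pow mult.commute)
  also have "\<dots> = (a [^] n) [^] k"
    by (simp add: b_pow_t nat_pow_pow mult.commute)
  finally show ?thesis
    by (simp add: a_pow_n)
qed

lemma inv_b: "inv b = b [^] (n * t - 1)"
proof (rule inv_equality)
  show "b [^] (n * t - 1) \<otimes> b = \<one>"
    using n_pos t_pos b_pow_nt by (simp flip: nat_pow_Suc)
qed simp_all

lemma nf_exists:
  assumes "g \<in> carrier G" obtains x y :: nat where "g = a [^] x \<otimes> b [^] y"
proof -
  have "g \<in> generate G {a, b}"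
    using assms generate_a_b by simp
  then have "\<exists>(x::nat) (y::nat). g = a [^] x \<otimes> b [^] y"
  proof (induction rule: generate.induct)
    case one
    show ?case by (intro exI[of _ "0::nat"]) simp
  next
    case (incl h)
    have "a = a [^] (1::nat) \<otimes> b [^] (0::nat)" "b = a [^] (0::nat) \<otimes> b [^] (1::nat)"
      by simp_all
    then show ?case
      using incl by blast
  next
    case (inv h)
    have "inv a = a [^] (n - 1) \<otimes> b [^] (0::nat)" "inv b = a [^] (0::nat) \<otimes> b [^] (n * t - 1)"
      using inv_a_pow[of 1] inv_b by simp_all
    then show ?case
      using inv by blast
  next
    case (eng h1 h2)
    then show ?case using nf_mult by blast
  qed
  then show ?thesis using that by blast
qed

lemma finite_carrier: "finite (carrier G)"
proof -
  have "carrier G \<subseteq> (\<lambda>(x, y). a [^] x \<otimes> b [^] y) ` ({..<n} \<times> {..<t})"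
  proof
    fix g assume "g \<in> carrier G"
    then obtain x y :: nat where g: "g = a [^] x \<otimes> b [^] y"
      by (rule nf_exists)
    have "b [^] y = b [^] (t * (y div t) + y mod t)"
      by simp
    also have "\<dots> = (b [^] t) [^] (y div t) \<otimes> b [^] (y mod t)"
      by (simp only: nat_pow_mult[symmetric] nat_pow_pow b_closed)
    finally have "b [^] y = a [^] (k * (y div t)) \<otimes> b [^] (y mod t)"
      by (simp add: b_pow_t nat_pow_pow)
    then have "g = a [^] ((x + k * (y div t)) mod n) \<otimes> b [^] (y mod t)"
      unfolding g by (simp add: nat_pow_mult[symmetric] m_assoc[symmetric] flip: a_pow_mod)
    then show "g \<in> (\<lambda>(x, y). a [^] x \<otimes> b [^] y) ` ({..<n} \<times> {..<t})"
      using n_pos t_pos by force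
  qed
  then show ?thesis
    by (rule finite_subset) simp
qed

lemma subgroup_nf_cancel:
  assumes K: "subgroup K G" and "a [^] (x::nat) \<otimes> b [^] ((y::nat) + y') \<in> K"
    and "a [^] (x'::nat) \<otimes> b [^] (y'::nat) \<in> K"
  shows "a [^] (x + (n - 1) * x' * rinv ^ y) \<otimes> b [^] y \<in> K"
proof -
  have "(a [^] x \<otimes> b [^] (y + y')) \<otimes> inv (a [^] x' \<otimes> b [^] y')
      = (a [^] x \<otimes> b [^] y) \<otimes> (b [^] y' \<otimes> (inv (b [^] y') \<otimes> inv (a [^] x')))"
    by (simp add: inv_mult_group m_assoc nat_pow_mult[symmetric])
  also have "b [^] y' \<otimes> (inv (b [^] y') \<otimes> inv (a [^] x')) = a [^] ((n - 1) * x') \<otimes> b [^] (0::nat)"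
    by (simp add: inv_a_pow flip: m_assoc)
  also have "(a [^] x \<otimes> b [^] y) \<otimes> (a [^] ((n - 1) * x') \<otimes> b [^] (0::nat))
      = a [^] (x + (n - 1) * x' * rinv ^ y) \<otimes> b [^] y"
    by (simp only: nf_mult add_0_right)
  finally show ?thesis
    using assms by (metis subgroup.m_closed subgroup.m_inv_closed)
qed

lemma subgroup_nf_same_b_cong:
  assumes K: "subgroup K G" and "v dvd n" and a_pow: "\<And>m::nat. a [^] m \<in> K \<Longrightarrow> v dvd m"
    and "a [^] (x::nat) \<otimes> b [^] (y::nat) \<in> K" "a [^] (x'::nat) \<otimes> b [^] y \<in> K"
  shows "[x = x'] (mod v)"
proof -
  have "a [^] (x + (n - 1) * x') \<in> K"
    using subgroup_nf_cancel[OF K, of x 0 y x'] assms(4,5) by simp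
  then show ?thesis
    using a_pow cong_add_pred_mult_iff[OF n_pos assms(2)] by blast
qed

lemma subgroup_nf_cong_closed:
  assumes K: "subgroup K G" and "v dvd n" and a_pow: "\<And>m::nat. v dvd m \<Longrightarrow> a [^] m \<in> K"
    and "a [^] (z::nat) \<otimes> b [^] (y::nat) \<in> K" "[x = z] (mod v)"
  shows "a [^] (x::nat) \<otimes> b [^] y \<in> K"
proof -
  have "x + (n - 1) * z + z = x + n * z"
    using n_pos by (cases n) simp_all
  then have "[x + (n - 1) * z + z = x] (mod n)"
    by (simp add: cong_def add.assoc)
  then have "a [^] x \<otimes> b [^] y = (a [^] (x + (n - 1) * z) \<otimes> b [^] (0::nat)) \<otimes> (a [^] z \<otimes> b [^] y)"
    by (simp only: nf_mult) (simp add: a_pow_eq_iff cong_sym)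
  moreover have "a [^] (x + (n - 1) * z) \<in> K"
    using a_pow cong_add_pred_mult_iff[OF n_pos assms(2)] assms(5) by blast
  ultimately show ?thesis
    using assms(4) by (simp add: subgroup.m_closed[OF K])
qed

lemma conj_a_nf:
  "inv a \<otimes> (a [^] (x::nat) \<otimes> b [^] (y::nat)) \<otimes> a = a [^] (n - 1 + x + rinv ^ y) \<otimes> b [^] y"
proof -
  have "inv a \<otimes> (a [^] x \<otimes> b [^] y) \<otimes> a
      = (a [^] (n - 1) \<otimes> b [^] (0::nat)) \<otimes> (a [^] x \<otimes> b [^] y) \<otimes> (a [^] (1::nat) \<otimes> b [^] (0::nat))"
    using inv_a_pow[of 1] by simp
  then show ?thesis
    by (simp only: nf_mult) simp
qed

lemma conj_b_a_pow: "inv b \<otimes> a [^] (x::nat) \<otimes> b = a [^] (x * r)"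
  by (simp add: m_assoc a_pow_mult_b flip: m_assoc[of "inv b" b])

lemma conj_b_nf: "inv b \<otimes> (a [^] (x::nat) \<otimes> b [^] (y::nat)) \<otimes> b = a [^] (x * r) \<otimes> b [^] y"
proof -
  have "inv b \<otimes> (a [^] x \<otimes> b [^] y) \<otimes> b = inv b \<otimes> ((a [^] x \<otimes> b) \<otimes> b [^] y)"
    by (simp add: m_assoc nat_pow_Suc2[symmetric] del: nat_pow_Suc)
  then show ?thesis
    by (simp add: a_pow_mult_b flip: m_assoc)
qed

lemma nf_pow:
  assumes "[rinv ^ y = 1] (mod v)"
  obtains z :: nat where "(a [^] (x::nat) \<otimes> b [^] (y::nat)) [^] (q::nat) = a [^] z \<otimes> b [^] (y * q)"
    "[z = x * q] (mod v)"
proof -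
  have "\<exists>z::nat. (a [^] x \<otimes> b [^] y) [^] q = a [^] z \<otimes> b [^] (y * q) \<and> [z = x * q] (mod v)"
  proof (induction q)
    case 0
    show ?case by (intro exI[of _ "0::nat"]) simp
  next
    case (Suc q)
    then obtain z :: nat where z: "(a [^] x \<otimes> b [^] y) [^] q = a [^] z \<otimes> b [^] (y * q)"
      "[z = x * q] (mod v)" by blast
    have "(a [^] x \<otimes> b [^] y) [^] Suc q = a [^] (z + x * rinv ^ (y * q)) \<otimes> b [^] (y * Suc q)"
      by (simp add: z(1) nf_mult add.commute[of "y * q"])
    moreover have "[z + x * rinv ^ (y * q) = x * q + x * 1 ^ q] (mod v)"
      using cong_add[OF z(2) cong_scalar_left[OF cong_pow[OF assms, of q], of x]]
      by (simp only: power_mult)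
    ultimately show ?case
      by (auto simp: algebra_simps)
  qed
  then show ?thesis using that by blast
qed

end

section \<open>The subgroups \<open>H_{v,i,c}\<close>\<close>

definition admissible :: "nat \<Rightarrow> nat \<Rightarrow> nat \<Rightarrow> nat \<Rightarrow> nat \<Rightarrow> nat \<Rightarrow> nat \<Rightarrow> bool" where
  "admissible n t k r v i c \<longleftrightarrow> 0 < v \<and> v dvd n \<and> 0 < c \<and> c dvd t \<and> i < v \<and>
     v dvd k + i * (t div c) \<and> ord v r dvd c \<and> [i * r = i] (mod v)"

context metacyclic
begin

definition Hn :: "nat \<Rightarrow> nat \<Rightarrow> nat \<Rightarrow> _" where
  "Hn v i c = generate G {a [^] v, a [^] i \<otimes> b [^] c}"

abbreviation adm :: "nat \<Rightarrow> nat \<Rightarrow> nat \<Rightarrow> bool" where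
  "adm \<equiv> admissible n t k r"

lemma Hn_subgroup: "subgroup (Hn v i c) G"
  unfolding Hn_def by (rule generate_is_subgroup) simp

lemma Hn_gens: "a [^] v \<in> Hn v i c" "a [^] i \<otimes> b [^] c \<in> Hn v i c"
  unfolding Hn_def by (auto intro: generate.incl)

lemma a_pow_dvd_mem_Hn: "v dvd m \<Longrightarrow> a [^] (m::nat) \<in> Hn v i c"
  using subgroup_nat_pow_closed[OF Hn_subgroup Hn_gens(1)] by (auto simp: nat_pow_pow)

lemma admissible_rinv_pow:
  assumes "adm v i c" shows "[rinv ^ c = 1] (mod v)"
proof -
  have "v dvd n" "Pocklington.ord v r dvd c"
    using assms by (simp_all add: admissible_def)
  then show ?thesis
    by (metis ord_divides r_pow_cong_one_iff)
qed

text \<open>An explicit subgroup containing \<open>Hn v i c\<close>; it supplies the upper bounds in the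
  membership criteria for \<open>Hn v i c\<close>.\<close>

definition nf_set :: "nat \<Rightarrow> nat \<Rightarrow> nat \<Rightarrow> _" where
  "nf_set v i c = {g \<in> carrier G. \<exists>(x::nat) (q::nat). g = a [^] x \<otimes> b [^] (c * q) \<and> [x = i * q] (mod v)}"

lemma nf_set_subgroup:
  assumes "[rinv ^ c = 1] (mod v)" shows "subgroup (nf_set v i c) G"
proof (rule finite_subgroupI[OF finite_carrier])
  show "\<one> \<in> nf_set v i c"
    unfolding nf_set_def by (auto intro!: exI[of _ "0::nat"])
  fix g h assume gh: "g \<in> nf_set v i c" "h \<in> nf_set v i c"
  then obtain x q x' q' :: nat where g: "g = a [^] x \<otimes> b [^] (c * q)" "[x = i * q] (mod v)"
    and h: "h = a [^] x' \<otimes> b [^] (c * q')" "[x' = i * q'] (mod v)"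
    unfolding nf_set_def by blast
  have "[x + x' * rinv ^ (c * q) = i * q + i * q' * 1 ^ q] (mod v)"
    unfolding power_mult by (intro cong_add cong_mult g(2) h(2) cong_pow assms)
  then have "[x + x' * rinv ^ (c * q) = i * (q + q')] (mod v)"
    by (simp add: algebra_simps)
  moreover have "g \<otimes> h = a [^] (x + x' * rinv ^ (c * q)) \<otimes> b [^] (c * (q + q'))"
    unfolding g h nf_mult by (simp add: distrib_left)
  moreover have "g \<otimes> h \<in> carrier G"
    using gh by (simp add: nf_set_def)
  ultimately show "g \<otimes> h \<in> nf_set v i c"
    unfolding nf_set_def by blast
qed (auto simp: nf_set_def)

lemma Hn_subset_nf_set:
  assumes "adm v i c" shows "Hn v i c \<subseteq> nf_set v i c"
  unfolding Hn_def
proof (rule generate_subgroup_incl[OF _ nf_set_subgroup[OF admissible_rinv_pow[OF assms]]])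
  have "a [^] v = a [^] v \<otimes> b [^] (c * 0) \<and> [v = i * 0] (mod v)"
    "a [^] i \<otimes> b [^] c = a [^] i \<otimes> b [^] (c * 1) \<and> [i = i * 1] (mod v)"
    "a [^] v \<in> carrier G" "a [^] i \<otimes> b [^] c \<in> carrier G"
    by (simp_all add: cong_def)
  then show "{a [^] v, a [^] i \<otimes> b [^] c} \<subseteq> nf_set v i c"
    unfolding nf_set_def by blast
qed

lemma a_pow_mem_Hn_iff:
  assumes adm: "adm v i c" shows "a [^] (m::nat) \<in> Hn v i c \<longleftrightarrow> v dvd m"
proof
  assume "a [^] m \<in> Hn v i c"
  then obtain x q :: nat where e: "a [^] m \<otimes> b [^] (0::nat) = a [^] x \<otimes> b [^] (c * q)"
    and xq: "[x = i * q] (mod v)"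
    using Hn_subset_nf_set[OF adm] unfolding nf_set_def by auto
  define d where "d = t div c"
  have td: "t = c * d" "c > 0"
    using adm by (auto simp: admissible_def d_def)
  have "t dvd c * q"
    using nf_b_exponent_unique[OF e] by (metis mod_0 mod_eq_0_iff_dvd)
  then obtain p where q: "q = d * p"
    using td by (auto simp: dvd_def)
  have "b [^] (c * q) = (b [^] t) [^] p"
    by (simp add: q td(1) nat_pow_pow mult.assoc)
  also have "\<dots> = a [^] (k * p)"
    by (simp add: b_pow_t nat_pow_pow)
  finally have "b [^] (c * q) = a [^] (k * p)" .
  then have "[m = x + k * p] (mod n)"
    using e by (simp add: nat_pow_mult a_pow_eq_iff)
  then have "[m = x + k * p] (mod v)"
    using adm by (auto simp: admissible_def intro: cong_dvd_modulus_nat)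
  moreover have "[x + k * p = (k + i * d) * p] (mod v)"
    using cong_add[OF xq cong_refl[of "k * p"]] by (simp add: q algebra_simps)
  moreover have "v dvd (k + i * d) * p"
    using adm by (simp add: admissible_def d_def)
  ultimately show "v dvd m"
    by (meson cong_dvd_iff cong_trans)
qed (rule a_pow_dvd_mem_Hn)

lemma b_exponent_mem_Hn_iff:
  assumes adm: "adm v i c" shows "(\<exists>z::nat. a [^] z \<otimes> b [^] (y::nat) \<in> Hn v i c) \<longleftrightarrow> c dvd y"
proof
  assume "c dvd y"
  then obtain q where y: "y = c * q" by blast
  obtain z :: nat where "(a [^] i \<otimes> b [^] c) [^] q = a [^] z \<otimes> b [^] (c * q)"
    using nf_pow[of c 1 i q] by (auto simp: cong_def)
  moreover have "(a [^] i \<otimes> b [^] c) [^] q \<in> Hn v i c"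
    by (rule subgroup_nat_pow_closed[OF Hn_subgroup Hn_gens(2)])
  ultimately show "\<exists>z::nat. a [^] z \<otimes> b [^] y \<in> Hn v i c"
    unfolding y by auto
next
  assume "\<exists>z::nat. a [^] z \<otimes> b [^] y \<in> Hn v i c"
  then obtain z x q :: nat where "a [^] z \<otimes> b [^] y = a [^] x \<otimes> b [^] (c * q)"
    using Hn_subset_nf_set[OF adm] unfolding nf_set_def by blast
  then have "y mod t = c * q mod t"
    by (rule nf_b_exponent_unique)
  moreover have "c dvd t"
    using adm by (simp add: admissible_def)
  ultimately have "y mod c = c * q mod c"
    by (metis mod_mod_cancel)
  then show "c dvd y"
    by (simp add: mod_eq_0_iff_dvd)
qed

lemma nf_c_mem_Hn_iff:
  assumes adm: "adm v i c" shows "a [^] (x::nat) \<otimes> b [^] c \<in> Hn v i c \<longleftrightarrow> [x = i] (mod v)"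
proof
  have vn: "v dvd n"
    using adm by (simp add: admissible_def)
  show "a [^] x \<otimes> b [^] c \<in> Hn v i c \<Longrightarrow> [x = i] (mod v)"
    using a_pow_mem_Hn_iff[OF adm] by (intro subgroup_nf_same_b_cong[OF Hn_subgroup vn _ _ Hn_gens(2)]) auto
  show "[x = i] (mod v) \<Longrightarrow> a [^] x \<otimes> b [^] c \<in> Hn v i c"
    by (rule subgroup_nf_cong_closed[OF Hn_subgroup vn a_pow_dvd_mem_Hn Hn_gens(2)])
qed

lemma Hn_normal:
  assumes adm: "adm v i c" shows "Hn v i c \<lhd> G"
  unfolding Hn_def
proof (rule finite_generate_normalI[OF finite_carrier generate_a_b])
  have vn: "v dvd n" and ir: "[i * r = i] (mod v)"
    using adm by (simp_all add: admissible_def)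
  have "a [^] v \<otimes> a = a \<otimes> a [^] v"
    using nat_pow_comm[of a v 1] by simp
  then have "inv a \<otimes> a [^] v \<otimes> a = a [^] v"
    by (simp add: m_assoc flip: m_assoc[of "inv a" a])
  moreover have "inv a \<otimes> (a [^] i \<otimes> b [^] c) \<otimes> a \<in> Hn v i c"
    unfolding conj_a_nf nf_c_mem_Hn_iff[OF adm]
    using cong_add_pred_add_iff[OF n_pos vn] admissible_rinv_pow[OF adm] by blast
  moreover have "inv b \<otimes> a [^] v \<otimes> b \<in> Hn v i c"
    unfolding conj_b_a_pow by (rule a_pow_dvd_mem_Hn) simp
  moreover have "inv b \<otimes> (a [^] i \<otimes> b [^] c) \<otimes> b \<in> Hn v i c"
    unfolding conj_b_nf nf_c_mem_Hn_iff[OF adm] by (rule ir)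
  ultimately show "inv g \<otimes> h \<otimes> g \<in> generate G {a [^] v, a [^] i \<otimes> b [^] c}"
    if "g \<in> {a, b}" "h \<in> {a [^] v, a [^] i \<otimes> b [^] c}" for g h
    using that Hn_gens(1) unfolding Hn_def by auto
qed auto

lemma Hn_inj:
  assumes adm: "adm v i c" "adm v' i' c'" and eq: "Hn v i c = Hn v' i' c'"
  shows "v = v' \<and> i = i' \<and> c = c'"
proof -
  have v: "v = v'"
    using Hn_gens(1)[of v i c] Hn_gens(1)[of v' i' c'] eq a_pow_mem_Hn_iff[OF adm(1)]
      a_pow_mem_Hn_iff[OF adm(2)] by (metis dvd_antisym)
  have c: "c = c'"
    using Hn_gens(2)[of i c v] Hn_gens(2)[of i' c' v'] eq b_exponent_mem_Hn_iff[OF adm(1)]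
      b_exponent_mem_Hn_iff[OF adm(2)] by (metis dvd_antisym)
  have "[i' = i] (mod v)"
    using Hn_gens(2)[of i' c' v'] eq nf_c_mem_Hn_iff[OF adm(1)] c by simp
  then have "i = i'"
    using adm v by (simp add: admissible_def cong_def)
  with v c show ?thesis by simp
qed

end

section \<open>Every normal subgroup is some \<open>H_{v,i,c}\<close>\<close>

context metacyclic
begin

lemma subgroup_b_exponents:
  assumes K: "subgroup K G"
  obtains c z :: nat where "0 < c" "c dvd t" "a [^] z \<otimes> b [^] c \<in> K"
    "\<And>(x::nat) (y::nat). a [^] x \<otimes> b [^] y \<in> K \<Longrightarrow> c dvd y"
proof -
  define R where "R c \<longleftrightarrow> 0 < c \<and> (\<exists>z::nat. a [^] z \<otimes> b [^] c \<in> K)" for c :: nat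
  define c where "c = Least R"
  have "a [^] ((n - 1) * k) \<otimes> b [^] t = \<one>"
    unfolding b_pow_t inv_a_pow[symmetric] by simp
  then have "a [^] ((n - 1) * k) \<otimes> b [^] t \<in> K"
    using subgroup.one_closed[OF K] by simp
  then have "R t"
    unfolding R_def using t_pos by blast
  then have Rc: "R c"
    unfolding c_def by (rule LeastI)
  then obtain z :: nat where c_pos: "0 < c" and z: "a [^] z \<otimes> b [^] c \<in> K"
    unfolding R_def by blast
  have dvd: "c dvd y" if "a [^] (x::nat) \<otimes> b [^] (y::nat) \<in> K" for x y
  proof -
    obtain z' :: nat where "(a [^] z \<otimes> b [^] c) [^] (y div c) = a [^] z' \<otimes> b [^] (c * (y div c))"
      using nf_pow[of c 1 z "y div c"] by (auto simp: cong_def)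
    then have "a [^] z' \<otimes> b [^] (c * (y div c)) \<in> K"
      using subgroup_nat_pow_closed[OF K z, of "y div c"] by simp
    moreover have "a [^] x \<otimes> b [^] (y mod c + c * (y div c)) \<in> K"
      using that by simp
    ultimately have "a [^] (x + (n - 1) * z' * rinv ^ (y mod c)) \<otimes> b [^] (y mod c) \<in> K"
      by (rule subgroup_nf_cancel[OF K, rotated])
    then have "R (y mod c) \<or> y mod c = 0"
      unfolding R_def by blast
    moreover have "\<not> R (y mod c)"
      using not_less_Least[of "y mod c" R] c_pos by (simp add: c_def)
    ultimately show ?thesis by (simp add: mod_eq_0_iff_dvd)
  qed
  have "c dvd t"
    using \<open>R t\<close> dvd unfolding R_def by blast
  show ?thesis
    using dvd by (rule that[OF c_pos \<open>c dvd t\<close> z])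
qed

lemma normal_nf_conditions:
  assumes N: "N \<lhd> G" and "v dvd n" and a_pow: "\<And>m::nat. a [^] m \<in> N \<longleftrightarrow> v dvd m"
    and gen: "a [^] (i::nat) \<otimes> b [^] (c::nat) \<in> N"
  shows "[i * r = i] (mod v)" "[rinv ^ c = 1] (mod v)"
proof -
  have K: "subgroup N G"
    using N by (rule normal_imp_subgroup)
  note same_b = subgroup_nf_same_b_cong[OF K assms(2)]
  show "[i * r = i] (mod v)"
    using normal.inv_op_closed1[OF N b_closed gen] a_pow gen
    unfolding conj_b_nf by (intro same_b) auto
  have "[n - 1 + i + rinv ^ c = i] (mod v)"
    using normal.inv_op_closed1[OF N a_closed gen] a_pow gen
    unfolding conj_a_nf by (intro same_b) auto
  then show "[rinv ^ c = 1] (mod v)"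
    using cong_add_pred_add_iff[OF n_pos assms(2)] by blast
qed

lemma subgroup_dvd_k_add_mult:
  assumes K: "subgroup K G" and a_pow: "\<And>m::nat. a [^] m \<in> K \<Longrightarrow> v dvd m"
    and "c dvd t" and "[rinv ^ c = 1] (mod v)" and gen: "a [^] (i::nat) \<otimes> b [^] c \<in> K"
  shows "v dvd k + i * (t div c)"
proof -
  obtain z :: nat where z: "(a [^] i \<otimes> b [^] c) [^] (t div c) = a [^] z \<otimes> b [^] (c * (t div c))"
    "[z = i * (t div c)] (mod v)"
    by (rule nf_pow[OF assms(4)])
  have "a [^] (z + k) \<in> K"
    using subgroup_nat_pow_closed[OF K gen, of "t div c"] z(1) assms(3)
    by (simp add: b_pow_t nat_pow_mult)
  then have "v dvd z + k"
    by (rule a_pow)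
  moreover have "[z + k = k + i * (t div c)] (mod v)"
    using cong_add[OF z(2) cong_refl[of k]] by (simp add: add.commute)
  ultimately show ?thesis
    using cong_dvd_iff by blast
qed

lemma subgroup_subset_Hn:
  assumes K: "subgroup K G" and vn: "v dvd n" and a_pow: "\<And>m::nat. a [^] m \<in> K \<Longrightarrow> v dvd m"
    and b_exp: "\<And>(x::nat) (y::nat). a [^] x \<otimes> b [^] y \<in> K \<Longrightarrow> c dvd y"
    and gen: "a [^] i \<otimes> b [^] c \<in> K"
  shows "K \<subseteq> Hn v i c"
proof
  fix g assume g: "g \<in> K"
  obtain x y :: nat where xy: "g = a [^] x \<otimes> b [^] y"
    by (rule nf_exists[OF subgroup.mem_carrier[OF K g]])
  have gK: "a [^] x \<otimes> b [^] y \<in> K"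
    using g xy by simp
  then have "c dvd y"
    by (rule b_exp)
  then obtain q where y: "y = c * q" ..
  obtain z :: nat where z: "(a [^] i \<otimes> b [^] c) [^] q = a [^] z \<otimes> b [^] y"
    using nf_pow[of c 1 i q] y by (auto simp: cong_def)
  have zK: "a [^] z \<otimes> b [^] y \<in> K"
    using subgroup_nat_pow_closed[OF K gen, of q] by (simp add: z)
  have zH: "a [^] z \<otimes> b [^] y \<in> Hn v i c"
    using subgroup_nat_pow_closed[OF Hn_subgroup Hn_gens(2)[of i c v], of q] by (simp add: z)
  have xz: "[x = z] (mod v)"
    by (rule subgroup_nf_same_b_cong[OF K vn a_pow gK zK])
  have "a [^] x \<otimes> b [^] y \<in> Hn v i c"
    using subgroup_nf_cong_closed[OF Hn_subgroup vn a_pow_dvd_mem_Hn zH xz] .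
  then show "g \<in> Hn v i c"
    by (simp add: xy)
qed

lemma normal_eq_Hn:
  assumes N: "N \<lhd> G"
  obtains v i c where "adm v i c" "N = Hn v i c"
proof -
  have K: "subgroup N G"
    using N by (rule normal_imp_subgroup)
  have "a [^] n \<in> N"
    using a_pow_n subgroup.one_closed[OF K] by simp
  then obtain v :: nat where v: "0 < v" and a_pow: "\<And>m::nat. a [^] m \<in> N \<longleftrightarrow> v dvd m"
    by (rule subgroup_nat_pow_mem_iff_dvd[OF K a_closed _ n_pos]) auto
  have vn: "v dvd n"
    using a_pow \<open>a [^] n \<in> N\<close> by blast
  obtain c z :: nat where c: "0 < c" "c dvd t" and z: "a [^] z \<otimes> b [^] c \<in> N"
    and b_exp: "\<And>(x::nat) (y::nat). a [^] x \<otimes> b [^] y \<in> N \<Longrightarrow> c dvd y"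
    by (rule subgroup_b_exponents[OF K]) auto
  define i where "i = z mod v"
  have "[i = z] (mod v)"
    by (simp add: i_def cong_def)
  then have gen: "a [^] i \<otimes> b [^] c \<in> N"
    using subgroup_nf_cong_closed[OF K vn _ z] a_pow by blast
  note conds = normal_nf_conditions[OF N vn a_pow gen]
  have "v dvd k + i * (t div c)"
    using a_pow by (intro subgroup_dvd_k_add_mult[OF K _ c(2) conds(2) gen]) blast
  moreover have "Pocklington.ord v r dvd c"
    using conds(2) r_pow_cong_one_iff[OF vn] ord_divides by blast
  ultimately have adm: "adm v i c"
    using v vn c conds(1) by (simp add: admissible_def i_def)
  have "N = Hn v i c"
  proof
    show "Hn v i c \<subseteq> N"
      unfolding Hn_def using a_pow gen by (intro generate_subgroup_incl[OF _ K]) auto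
    show "N \<subseteq> Hn v i c"
      using a_pow b_exp gen by (intro subgroup_subset_Hn[OF K vn]) auto
  qed
  with adm show ?thesis
    by (rule that)
qed

lemma normal_subgroups_eq_Hn_image: "{N. N \<lhd> G} = (\<lambda>(v, i, c). Hn v i c) ` {(v, i, c). adm v i c}"
proof
  show "{N. N \<lhd> G} \<subseteq> (\<lambda>(v, i, c). Hn v i c) ` {(v, i, c). adm v i c}"
    using normal_eq_Hn by (auto simp: image_iff) metis
  show "(\<lambda>(v, i, c). Hn v i c) ` {(v, i, c). adm v i c} \<subseteq> {N. N \<lhd> G}"
    using Hn_normal by auto
qed

lemma inj_on_Hn: "inj_on (\<lambda>(v, i, c). Hn v i c) {(v, i, c). adm v i c}"
  using Hn_inj by (auto intro!: inj_onI)

end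

lemma cong_mult_self_iff_int_dvd: "[i * r = i] (mod v) \<longleftrightarrow> int v dvd int i * (int r - 1)"
proof -
  have "int i * (int r - 1) = int (i * r) - int i"
    by (simp add: algebra_simps)
  then show ?thesis
    by (simp add: cong_iff_dvd_diff flip: cong_int_iff)
qed

lemma int_triple_mem_Nset_iff: "(int v, int i, int c) \<in> Nset n t k r \<longleftrightarrow> admissible n t k r v i c"
proof -
  have "int k + int i * (int t div int c) = int (k + i * (t div c))"
    by (simp add: zdiv_int)
  then show ?thesis
    unfolding Nset_def admissible_def ov_def
    by (auto simp: cong_mult_self_iff_int_dvd simp del: of_nat_add of_nat_mult)
qed

lemma Nset_eq_image: "Nset n t k r = (\<lambda>(v, i, c). (int v, int i, int c)) ` {(v, i, c). admissible n t k r v i c}"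
proof
  show "Nset n t k r \<subseteq> (\<lambda>(v, i, c). (int v, int i, int c)) ` {(v, i, c). admissible n t k r v i c}"
  proof
    fix x assume x: "x \<in> Nset n t k r"
    then obtain v i c :: int where "x = (v, i, c)" "0 \<le> v" "0 \<le> i" "0 \<le> c"
      unfolding Nset_def by auto
    then have xv: "x = (int (nat v), int (nat i), int (nat c))"
      by simp
    with x have "(int (nat v), int (nat i), int (nat c)) \<in> Nset n t k r"
      by (simp only:)
    then have "(nat v, nat i, nat c) \<in> {(v, i, c). admissible n t k r v i c}"
      by (simp only: int_triple_mem_Nset_iff mem_Collect_eq prod.case)
    then show "x \<in> (\<lambda>(v, i, c). (int v, int i, int c)) ` {(v, i, c). admissible n t k r v i c}"
      unfolding xv by (rule rev_image_eqI) simp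
  qed
  show "(\<lambda>(v, i, c). (int v, int i, int c)) ` {(v, i, c). admissible n t k r v i c} \<subseteq> Nset n t k r"
    by (auto simp only: int_triple_mem_Nset_iff mem_Collect_eq prod.case image_iff)
qed

theorem lemma1:
  fixes G :: "('g, 'm) monoid_scheme" and a b :: 'g and n t k r :: nat
  assumes "n > 0" and "t > 0"
    and "presented_by G a b n t k r"
    and "[r ^ t = 1] (mod n)"
    and "[int k * (int r - 1) = 0] (mod int n)"
  shows "{N. N \<lhd> G} = (\<lambda>(v, i, c). Hsub G a b v i c) ` Nset n t k r
         \<and> inj_on (\<lambda>(v, i, c). Hsub G a b v i c) (Nset n t k r)"
proof -
  have "[k * r = k] (mod n)"
    using assms(5) by (simp add: cong_iff_dvd_diff cong_0_iff algebra_simps flip: cong_int_iff)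
  then interpret metacyclic n t k r G a b
    using assms by unfold_locales
  have "(\<lambda>(v, i, c). Hsub G a b v i c) \<circ> (\<lambda>(v, i, c). (int v, int i, int c)) = (\<lambda>(v, i, c). Hn v i c)"
    by (auto simp: Hsub_def Hn_def int_pow_int)
  then show ?thesis
    unfolding Nset_eq_image normal_subgroups_eq_Hn_image
    using inj_on_Hn by (simp add: image_comp inj_on_imageI)
qed

end
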